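(* Fix $\alpha,\beta>0$. For $n\ge2$ let $S$ be a random $\alpha/\beta$-staircase tableau of size $n$ with law $\mathbb{P}_{n,\alpha,\beta}$, and let $A_n$ be the number of boxes $(n-j,j)$, $1\le j\le n-1$ (the second main diagonal), that contain $\alpha$. Then, as $n\to\infty$, $A_n$ converges in distribution to a Poisson random variable with parameter $1/2$.
   Context: A staircase tableau of size $n$ has boxes $(i,j)$ with $i,j\ge1$ and $i+j\le n+1$, rows numbered from the top and columns from the left. An $\alpha/\beta$-staircase tableau of size $n$ is a filling in which each box is empty or contains $\alpha$ or $\beta$, such that: all boxes in the same column and above an $\alpha$ are empty; all boxes in the same row and to the left of a $\beta$ are empty; every main-diagonal box (with $i+j=n+1$) contains a symbol. $\overline{\mathcal{S}}_n$ is the set of these. The weight is $wt(S)=\alpha^{N_\alpha}\beta^{N_\beta}$ ($N_\alpha,N_\beta$ the numbers of $\alpha$'s, $\beta$'s), and $\mathbb{P}_{n,\alpha,\beta}(S)=wt(S)/\sum_{T\in\overline{\mathcal{S}}_n}wt(T)$. *)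

theory Defs
  imports "HOL-Probability.Probability"
begin

datatype cell = Empty | Alpha | Beta

definition is_box :: "nat \<Rightarrow> nat \<times> nat \<Rightarrow> bool" where
  "is_box n b \<longleftrightarrow> (case b of (i, j) \<Rightarrow> 1 \<le> i \<and> 1 \<le> j \<and> i + j \<le> n + 1)"

text \<open>Alpha/beta staircase tableaux of size n: fillings of the boxes (i,j) (row i, column j),
  empty outside the staircase.\<close>
definition staircase :: "nat \<Rightarrow> (nat \<times> nat \<Rightarrow> cell) set" where
  "staircase n = {S.
     (\<forall>b. \<not> is_box n b \<longrightarrow> S b = Empty) \<and>
     (\<forall>i j. is_box n (i, j) \<and> S (i, j) = Alpha \<longrightarrow> (\<forall>i'. 1 \<le> i' \<and> i' < i \<longrightarrow> S (i', j) = Empty)) \<and>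
     (\<forall>i j. is_box n (i, j) \<and> S (i, j) = Beta \<longrightarrow> (\<forall>j'. 1 \<le> j' \<and> j' < j \<longrightarrow> S (i, j') = Empty)) \<and>
     (\<forall>i j. is_box n (i, j) \<and> i + j = n + 1 \<longrightarrow> S (i, j) \<noteq> Empty)}"

definition num_sym :: "nat \<Rightarrow> cell \<Rightarrow> (nat \<times> nat \<Rightarrow> cell) \<Rightarrow> nat" where
  "num_sym n c S = card {b. is_box n b \<and> S b = c}"

definition wt :: "real \<Rightarrow> real \<Rightarrow> nat \<Rightarrow> (nat \<times> nat \<Rightarrow> cell) \<Rightarrow> real" where
  "wt \<alpha> \<beta> n S = \<alpha> ^ num_sym n Alpha S * \<beta> ^ num_sym n Beta S"

definition stair_prob :: "real \<Rightarrow> real \<Rightarrow> nat \<Rightarrow> (nat \<times> nat \<Rightarrow> cell) \<Rightarrow> real" where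
  "stair_prob \<alpha> \<beta> n S = wt \<alpha> \<beta> n S / (\<Sum>T\<in>staircase n. wt \<alpha> \<beta> n T)"

definition stair_measure :: "real \<Rightarrow> real \<Rightarrow> nat \<Rightarrow> (nat \<times> nat \<Rightarrow> cell) measure" where
  "stair_measure \<alpha> \<beta> n = point_measure (staircase n) (\<lambda>S. ennreal (stair_prob \<alpha> \<beta> n S))"

definition A_count :: "nat \<Rightarrow> (nat \<times> nat \<Rightarrow> cell) \<Rightarrow> nat" where
  "A_count n S = card {j. 1 \<le> j \<and> j \<le> n - 1 \<and> S (n - j, j) = Alpha}"

definition A_law :: "real \<Rightarrow> real \<Rightarrow> nat \<Rightarrow> real measure" where
  "A_law \<alpha> \<beta> n = distr (stair_measure \<alpha> \<beta> n) borel (\<lambda>S. real (A_count n S))"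

end

theory Submission
  imports Defs "HOL-Real_Asymp.Real_Asymp"
begin

text \<open>Deleting the first column of a tableau of size \<open>n + 1\<close> leaves a tableau of size \<open>n\<close>, and the
  admissible first columns depend only on the set of rows of the smaller tableau that contain no
  \<open>\<beta>\<close>. Marking these rows with an extra variable \<open>u\<close>, the weighted sums over tableaux obey a
  linear recursion in \<open>n\<close>; it gives the partition function as a product and the factorial moments
  \<open>E (A_n choose k)\<close> through an explicit recursion. Comparing that recursion with the elementary
  symmetric functions of \<open>x, x + 1, \<dots>, x + n - 2\<close>, whose \<open>k\<close>-th member is about
  \<open>(n\<^sup>2/2)\<^sup>k / k!\<close>, shows that the factorial moments tend to \<open>(1/2)\<^sup>k / k!\<close>, those of the Poisson
  law with parameter \<open>1/2\<close>. The Bonferroni inequalities turn this into convergence of every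
  probability \<open>P (A_n = j)\<close>, hence of the distribution functions.\<close>

section \<open>Bonferroni inequalities and factorial moments\<close>

lemma alternating_sum_choose_Suc:
  "(\<Sum>i\<le>M. (-1)^i * real (Suc m choose i)) = (-1)^M * real (m choose M)"
  by (induction M) (simp_all add: algebra_simps)

text \<open>The truncated inclusion-exclusion expansion of \<open>[a = j] = \<Sum>i. (-1)^i (j+i choose j) (a choose j+i)\<close>.\<close>
definition bonferroni_sum :: "nat \<Rightarrow> nat \<Rightarrow> nat \<Rightarrow> real" where
  "bonferroni_sum j M a = (\<Sum>i\<le>M. (-1)^i * real (j+i choose j) * real (a choose (j+i)))"

lemma bonferroni_sum_eq:
  assumes "j \<le> a"
  shows "bonferroni_sum j M a = real (a choose j) * (\<Sum>i\<le>M. (-1)^i * real ((a - j) choose i))"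
proof -
  have "real (j+i choose j) * real (a choose (j+i)) = real (a choose j) * real ((a - j) choose i)" for i
  proof (cases "j + i \<le> a")
    case True
    then show ?thesis using choose_mult[of j "j+i" a] by (simp flip: of_nat_mult add: mult.commute)
  next
    case False
    then show ?thesis using assms by (simp add: binomial_eq_0)
  qed
  then show ?thesis
    unfolding bonferroni_sum_def sum_distrib_left by (intro sum.cong) (auto simp: mult_ac)
qed

lemma bonferroni_sum_sign: "0 \<le> (-1)^M * (bonferroni_sum j M a - of_bool (a = j))"
proof (cases "j \<le> a")
  case False
  then have "bonferroni_sum j M a = 0" unfolding bonferroni_sum_def by (intro sum.neutral) auto
  then show ?thesis using False by simp
next
  case True
  show ?thesis
  proof (cases "a = j")
    case True
    then show ?thesis by (simp add: bonferroni_sum_eq sum.atMost_shift)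
  next
    case False
    with \<open>j \<le> a\<close> obtain m where m: "a - j = Suc m" by (cases "a - j") auto
    have "(-1)^M * (bonferroni_sum j M a - of_bool (a = j))
        = real (a choose j) * ((-1)^M * (-1)^M) * real (m choose M)"
      using False \<open>j \<le> a\<close> by (simp add: bonferroni_sum_eq m alternating_sum_choose_Suc mult_ac)
    also have "\<dots> \<ge> 0" by (simp flip: power_add)
    finally show ?thesis .
  qed
qed

lemma tendsto_of_alternating_bounds:
  fixes P :: "nat \<Rightarrow> real" and S :: "nat \<Rightarrow> nat \<Rightarrow> real"
  assumes bounds: "\<And>N M. 0 \<le> (-1)^M * (S N M - P N)"
    and S_lim: "\<And>M. (\<lambda>N. S N M) \<longlonglongrightarrow> T M"
    and T_lim: "T \<longlonglongrightarrow> p"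
  shows "P \<longlonglongrightarrow> p"
  unfolding LIMSEQ_iff real_norm_def
proof (intro allI impI)
  fix r :: real assume "0 < r"
  then have r2: "0 < r/2" by simp
  obtain M where M: "\<And>M'. M' \<ge> M \<Longrightarrow> \<bar>T M' - p\<bar> < r/2"
    using LIMSEQ_D[OF T_lim r2] by auto
  obtain N1 where N1: "\<And>N. N \<ge> N1 \<Longrightarrow> \<bar>S N (2*M) - T (2*M)\<bar> < r/2"
    using LIMSEQ_D[OF S_lim r2] by auto
  obtain N2 where N2: "\<And>N. N \<ge> N2 \<Longrightarrow> \<bar>S N (2*M+1) - T (2*M+1)\<bar> < r/2"
    using LIMSEQ_D[OF S_lim r2] by auto
  have "\<bar>P N - p\<bar> < r" if "N \<ge> max N1 N2" for N
  proof -
    have "P N \<le> S N (2*M)" "S N (2*M+1) \<le> P N"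
      using bounds[where N=N and M="2*M"] bounds[where N=N and M="2*M+1"] by (simp_all add: power_mult)
    moreover have "\<bar>T (2*M) - p\<bar> < r/2" "\<bar>T (2*M+1) - p\<bar> < r/2" using M by auto
    ultimately show ?thesis using N1[of N] N2[of N] that unfolding abs_less_iff by auto
  qed
  then show "\<exists>N0. \<forall>N\<ge>N0. \<bar>P N - p\<bar> < r" by blast
qed

lemma tendsto_bonferroni_poisson:
  fixes l :: real
  shows "(\<lambda>M. \<Sum>i\<le>M. (-1)^i * real (j+i choose j) * (l^(j+i) / fact (j+i)))
           \<longlonglongrightarrow> l^j / fact j * exp (-l)"
proof -
  have summand: "(-1)^i * real (j+i choose j) * (l^(j+i) / fact (j+i)) = l^j / fact j * ((-l)^i / fact i)" for i
  proof -
    have "real (j+i choose j) = fact (j+i) / (fact j * fact i)"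
      using binomial_fact[of j "j+i", where 'a=real] by simp
    then show ?thesis by (simp add: power_add power_minus' field_simps)
  qed
  have "(\<lambda>n. (-l)^n / fact n) sums exp (-l)"
    using exp_converges[of "-l"] by (simp add: divide_inverse_commute)
  then have "(\<lambda>M. \<Sum>i<Suc M. (-l)^i / fact i) \<longlonglongrightarrow> exp (-l)"
    unfolding sums_def by (rule LIMSEQ_Suc)
  then have "(\<lambda>M. l^j / fact j * (\<Sum>i\<le>M. (-l)^i / fact i)) \<longlonglongrightarrow> l^j / fact j * exp (-l)"
    unfolding lessThan_Suc_atMost by (intro tendsto_mult tendsto_const)
  then show ?thesis unfolding summand sum_distrib_left .
qed

text \<open>The method of factorial moments: \<open>m N k\<close> plays the role of \<open>E (X_N choose k)\<close> and
  \<open>P N\<close> that of \<open>P (X_N = j)\<close>.\<close>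
lemma tendsto_poisson_of_factorial_moments:
  fixes P :: "nat \<Rightarrow> real" and m :: "nat \<Rightarrow> nat \<Rightarrow> real"
  assumes bonferroni: "\<And>N M. 0 \<le> (-1)^M * ((\<Sum>i\<le>M. (-1)^i * real (j+i choose j) * m N (j+i)) - P N)"
    and moments: "\<And>k. (\<lambda>N. m N k) \<longlonglongrightarrow> l^k / fact k"
  shows "P \<longlonglongrightarrow> l^j / fact j * exp (-l)"
  by (rule tendsto_of_alternating_bounds[OF bonferroni _ tendsto_bonferroni_poisson])
     (intro tendsto_intros moments)

section \<open>Elementary symmetric functions of arithmetic progressions\<close>

text \<open>\<open>esym_ap k y L\<close> is the elementary symmetric polynomial \<open>e_k\<close> of the \<open>L\<close> numbers
  \<open>y, y + 1, \<dots>, y + L - 1\<close>.\<close>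
fun esym_ap :: "nat \<Rightarrow> real \<Rightarrow> nat \<Rightarrow> real" where
  "esym_ap 0 y L = 1"
| "esym_ap (Suc k) y 0 = 0"
| "esym_ap (Suc k) y (Suc L) = y * esym_ap k (y+1) L + esym_ap (Suc k) (y+1) L"

definition ap_sum :: "real \<Rightarrow> nat \<Rightarrow> real" where
  "ap_sum y L = (\<Sum>i<L. y + real i)"

lemma ap_sum_Suc: "ap_sum y (Suc L) = y + ap_sum (y+1) L"
  unfolding ap_sum_def sum.lessThan_Suc_shift by (simp add: algebra_simps)

lemma ap_sum_eq: "ap_sum y L = real L * y + real L * (real L - 1) / 2"
  unfolding ap_sum_def by (induction L) (simp_all add: field_simps)

lemma ap_sum_nonneg: "0 \<le> y \<Longrightarrow> 0 \<le> ap_sum y L"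
  unfolding ap_sum_def by (intro sum_nonneg) auto

lemma esym_ap_nonneg: "0 \<le> y \<Longrightarrow> 0 \<le> esym_ap k y L"
  by (induction k y L rule: esym_ap.induct) auto

lemma esym_ap_mono_base: "0 \<le> y \<Longrightarrow> y \<le> y' \<Longrightarrow> esym_ap k y L \<le> esym_ap k y' L"
proof (induction k y L arbitrary: y' rule: esym_ap.induct)
  case (3 k y L)
  have "y * esym_ap k (y+1) L \<le> y' * esym_ap k (y'+1) L"
    using 3 by (intro mult_mono) (auto intro: esym_ap_nonneg)
  moreover have "esym_ap (Suc k) (y+1) L \<le> esym_ap (Suc k) (y'+1) L" using 3 by auto
  ultimately show ?case by simp
qed auto

lemma esym_ap_shift_le: "0 \<le> y \<Longrightarrow> esym_ap k (y+1) L \<le> esym_ap k y (Suc L)"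
  by (cases k) (auto intro!: esym_ap_nonneg mult_nonneg_nonneg)

lemma esym_ap_mono_length:
  assumes "0 \<le> y" "L \<le> L'"
  shows "esym_ap k y L \<le> esym_ap k y L'"
  using assms(2)
proof (induction L' rule: dec_induct)
  case (step L')
  have "esym_ap k y L' \<le> esym_ap k y (Suc L')"
    using esym_ap_mono_base[of y "y+1" k L'] esym_ap_shift_le[of y k L'] assms(1) by auto
  with step show ?case by simp
qed simp

lemma esym_ap_Suc_eq_sum:
  "esym_ap (Suc k) y L = (\<Sum>j<L. (y + j) * esym_ap k (y + j + 1) (L - 1 - j))"
proof (induction L arbitrary: y)
  case (Suc L)
  then show ?case
    unfolding sum.lessThan_Suc_shift by (simp add: algebra_simps)
qed simp

lemma power_Suc_ge_two_terms:
  fixes b y :: real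
  assumes "0 \<le> b" "0 \<le> y"
  shows "b^(Suc k) + real (Suc k) * y * b^k \<le> (y + b)^(Suc k)"
proof (induction k)
  case (Suc k)
  have "b^(Suc (Suc k)) + real (Suc (Suc k)) * y * b^(Suc k)
      \<le> (y + b) * (b^(Suc k) + real (Suc k) * y * b^k)"
    using assms by (simp add: algebra_simps)
  also have "\<dots> \<le> (y + b) * (y + b)^(Suc k)"
    using Suc assms by (intro mult_left_mono) auto
  finally show ?case by simp
qed simp

lemma power_Suc_diff_le:
  fixes A B :: real
  assumes "0 \<le> B" "B \<le> A"
  shows "A^(Suc n) - B^(Suc n) \<le> (Suc n) * A^n * (A - B)"
proof (induction n)
  case (Suc n)
  have "A^(Suc (Suc n)) - B^(Suc (Suc n)) = A * (A^(Suc n) - B^(Suc n)) + B^(Suc n) * (A - B)"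
    by (simp add: algebra_simps)
  also have "\<dots> \<le> A * ((Suc n) * A^n * (A - B)) + A^(Suc n) * (A - B)"
    using Suc assms by (intro add_mono mult_left_mono mult_right_mono power_mono) auto
  also have "\<dots> = (Suc (Suc n)) * A^(Suc n) * (A - B)" by (simp add: algebra_simps)
  finally show ?case .
qed simp

lemma esym_ap_le: "0 \<le> y \<Longrightarrow> esym_ap k y L \<le> (ap_sum y L)^k / fact k"
proof (induction k y L rule: esym_ap.induct)
  case (3 k y L)
  let ?s = "ap_sum (y+1) L"
  have s0: "0 \<le> ?s" using 3 by (intro ap_sum_nonneg) auto
  have "esym_ap (Suc k) y (Suc L) \<le> y * (?s^k / fact k) + ?s^(Suc k) / fact (Suc k)"
    using 3 by (simp only: esym_ap.simps) (intro add_mono mult_left_mono; simp)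
  also have "\<dots> = (?s^(Suc k) + (Suc k) * y * ?s^k) / fact (Suc k)"
  proof -
    have "real (Suc k) * (y * ?s^k) / (real (Suc k) * fact k) = y * (?s^k / fact k)"
      by (subst mult_divide_mult_cancel_left) auto
    then show ?thesis unfolding add_divide_distrib fact_Suc by (simp add: mult.assoc)
  qed
  also have "\<dots> \<le> (y + ?s)^(Suc k) / fact (Suc k)"
    using power_Suc_ge_two_terms[OF s0 3(3), of k] by (intro divide_right_mono) auto
  finally show ?case by (simp add: ap_sum_Suc)
qed (simp_all add: ap_sum_def)

lemma power_max0_add_le:
  fixes v y M :: real
  assumes "0 \<le> y" "y \<le> M"
  shows "(max 0 (v + y))^(Suc n) \<le> (max 0 v)^(Suc n) + (Suc n) * y * (max 0 (v + M))^n"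
proof -
  let ?A = "max 0 (v + y)" and ?B = "max 0 v"
  have "?A^(Suc n) - ?B^(Suc n) \<le> (Suc n) * ?A^n * (?A - ?B)"
    by (rule power_Suc_diff_le) (use assms in auto)
  also have "\<dots> \<le> (Suc n) * (max 0 (v + M))^n * y"
    using assms by (intro mult_mono power_mono) auto
  finally show ?thesis by (simp add: algebra_simps)
qed

lemma esym_ap_ge: "0 \<le> y \<Longrightarrow> (max 0 (ap_sum y L - k * (y + L)))^k / fact k \<le> esym_ap k y L"
proof (induction k y L rule: esym_ap.induct)
  case (3 k y L)
  let ?s = "ap_sum (y+1) L" and ?M = "y + 1 + real L"
  let ?v = "?s - (Suc k) * ?M"
  have e1: "(max 0 (?v + ?M))^k / fact k \<le> esym_ap k (y+1) L"
    using 3(1) 3(3) by (simp add: algebra_simps)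
  have e2: "(max 0 ?v)^(Suc k) / fact (Suc k) \<le> esym_ap (Suc k) (y+1) L"
    using 3(2) 3(3) by simp
  have "(max 0 (ap_sum y (Suc L) - (Suc k) * (y + Suc L)))^(Suc k) = (max 0 (?v + y))^(Suc k)"
    by (simp add: ap_sum_Suc algebra_simps)
  also have "\<dots> \<le> (max 0 ?v)^(Suc k) + (Suc k) * y * (max 0 (?v + ?M))^k"
    by (rule power_max0_add_le) (use 3 in auto)
  finally have "(max 0 (ap_sum y (Suc L) - (Suc k) * (y + Suc L)))^(Suc k) / fact (Suc k)
      \<le> ((max 0 ?v)^(Suc k) + (Suc k) * y * (max 0 (?v + ?M))^k) / fact (Suc k)"
    by (intro divide_right_mono) auto
  also have "\<dots> = (max 0 ?v)^(Suc k) / fact (Suc k) + y * ((max 0 (?v + ?M))^k / fact k)"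
    unfolding add_divide_distrib fact_Suc by simp
  also have "\<dots> \<le> esym_ap (Suc k) (y+1) L + y * esym_ap k (y+1) L"
    using e1 e2 3(3) by (intro add_mono mult_left_mono)
  finally show ?case by simp
qed (simp_all add: ap_sum_def)

section \<open>The limiting factorial moments\<close>

text \<open>With \<open>a = 1/\<alpha>\<close> and \<open>x = u/\<beta>\<close>, \<open>factorial_moment a k n x\<close> turns out to be the \<open>k\<close>-th factorial moment
  of \<open>A_n\<close> under the weights \<open>wt \<alpha> \<beta> n S * u ^ (number of rows of S without \<beta>)\<close>.\<close>
fun factorial_moment :: "real \<Rightarrow> nat \<Rightarrow> nat \<Rightarrow> real \<Rightarrow> real" where
  "factorial_moment a 0 N x = 1"
| "factorial_moment a (Suc k) N x = (if N < 2 then 0 else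
     (\<Sum>j<N-1. (x + real j) * factorial_moment a k (N-2-j) (x + real j)) / ((x + a + real N - 2) * (x + a + real N - 1)))"

lemma factorial_moment_nonneg: "0 \<le> x \<Longrightarrow> 0 < a \<Longrightarrow> 0 \<le> factorial_moment a k N x"
proof (induction k arbitrary: N x)
  case (Suc k)
  then show ?case
    by (cases "N < 2") (auto intro!: divide_nonneg_pos sum_nonneg mult_nonneg_nonneg)
qed simp

lemma factorial_moment_Suc_Suc:
  "factorial_moment a (Suc k) (Suc (Suc N)) x
     = factorial_moment a (Suc k) (Suc N) (x + 1) + x * factorial_moment a k N x / ((x + a + real N) * (x + a + real N + 1))"
proof -
  define D where "D = (x + a + real N) * (x + a + real N + 1)"
  define S where "S = (\<Sum>j<N. (x + 1 + real j) * factorial_moment a k (N - 1 - j) (x + 1 + real j))"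
  have "(\<Sum>j<Suc N. (x + real j) * factorial_moment a k (N - j) (x + real j)) = x * factorial_moment a k N x + S"
    unfolding S_def sum.lessThan_Suc_shift by (simp add: algebra_simps)
  then have "factorial_moment a (Suc k) (Suc (Suc N)) x = (x * factorial_moment a k N x + S) / D"
    by (simp add: D_def algebra_simps)
  moreover have "factorial_moment a (Suc k) (Suc N) (x + 1) = S / D"
    unfolding S_def D_def by (cases N) (simp_all add: algebra_simps)
  ultimately show ?thesis unfolding D_def[symmetric] by (simp add: add_divide_distrib)
qed

text \<open>The recursion for \<open>factorial_moment\<close> mirrors the expansion \<open>esym_ap_Suc_eq_sum\<close>, except that each
  step divides by a factor between \<open>(x + a + N - 2k)\<^sup>2\<close> and \<open>(x + a + N)\<^sup>2\<close>.\<close>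
lemma factorial_moment_le:
  assumes "0 \<le> x" "0 < a" "2 * real k < x + a + real N"
  shows "factorial_moment a k N x \<le> esym_ap k x (N-1) / (x + a + real N - 2 * real k)^(2*k)"
  using assms
proof (induction k arbitrary: N x)
  case (Suc k)
  show ?case
  proof (cases "N < 2")
    case False
    define B where "B = x + a + real N - 2 * real (Suc k)"
    define D where "D = (x + a + real N - 2) * (x + a + real N - 1)"
    have B0: "0 < B" using Suc.prems unfolding B_def by simp
    have BD: "B^2 \<le> D" unfolding D_def power2_eq_square
      using B0 by (intro mult_mono) (auto simp: B_def)
    have summand: "(x + j) * factorial_moment a k (N-2-j) (x + j) \<le> (x + j) * esym_ap k (x + j + 1) (N-2-j) / B^(2*k)"
      if "j < N - 1" for j
    proof -
      have N_j: "real (N-2-j) = real N - 2 - real j" using that False by simp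
      have "x + j + a + real (N-2-j) - 2 * real k = B" unfolding N_j B_def by simp
      moreover have "factorial_moment a k (N-2-j) (x + j)
          \<le> esym_ap k (x + j) (N-2-j-1) / (x + j + a + real (N-2-j) - 2 * real k)^(2*k)"
        using Suc.prems by (intro Suc.IH) (auto simp: N_j)
      ultimately have "factorial_moment a k (N-2-j) (x + j) \<le> esym_ap k (x + j) (N-2-j-1) / B^(2*k)"
        by simp
      also have "\<dots> \<le> esym_ap k (x + j + 1) (N-2-j) / B^(2*k)"
        using Suc.prems B0 by (intro divide_right_mono order.trans[OF esym_ap_mono_base esym_ap_mono_length]) auto
      finally have "factorial_moment a k (N-2-j) (x + j) \<le> esym_ap k (x + j + 1) (N-2-j) / B^(2*k)" .
      from mult_left_mono[OF this, of "x + j"] show ?thesis using Suc.prems by simp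
    qed
    have "D * factorial_moment a (Suc k) N x = (\<Sum>j<N-1. (x + j) * factorial_moment a k (N-2-j) (x + j))"
      using False B0 by (simp add: D_def B_def)
    also have "\<dots> \<le> (\<Sum>j<N-1. (x + j) * esym_ap k (x + j + 1) (N-2-j) / B^(2*k))"
      using summand by (intro sum_mono) auto
    also have "\<dots> = esym_ap (Suc k) x (N-1) / B^(2*k)"
      unfolding esym_ap_Suc_eq_sum sum_divide_distrib by (simp add: diff_diff_add)
    finally have "D * factorial_moment a (Suc k) N x \<le> esym_ap (Suc k) x (N-1) / B^(2*k)" .
    then have "B^2 * factorial_moment a (Suc k) N x \<le> esym_ap (Suc k) x (N-1) / B^(2*k)"
      using BD factorial_moment_nonneg[of x a "Suc k" N] Suc.prems
      by (meson mult_right_mono order.trans)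
    then have "factorial_moment a (Suc k) N x \<le> esym_ap (Suc k) x (N-1) / B^(2*k) / B^2"
      using B0 by (simp add: pos_le_divide_eq mult_ac del: factorial_moment.simps)
    then show ?thesis
      unfolding B_def[symmetric] by (simp add: power_add power2_eq_square mult_ac del: factorial_moment.simps)
  qed (use Suc.prems in \<open>simp add: esym_ap_nonneg\<close>)
qed simp

lemma factorial_moment_ge:
  assumes "0 \<le> x" "0 < a"
  shows "esym_ap k x (N+1-2*k) / (x + a + real N)^(2*k) \<le> factorial_moment a k N x"
  using assms
proof (induction k arbitrary: N x)
  case (Suc k)
  show ?case
  proof (cases "N < 2")
    case False
    define C where "C = x + a + real N - 2"
    define D where "D = (x + a + real N - 2) * (x + a + real N - 1)"
    define L where "L = N + 1 - 2 * Suc k"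
    have C0: "0 < C" using Suc.prems False unfolding C_def by simp
    have summand: "(x + j) * esym_ap k (x + j + 1) (L - 1 - j) \<le> C^(2*k) * ((x + j) * factorial_moment a k (N-2-j) (x + j))"
      if "j < L" for j
    proof -
      have N_j: "real (N-2-j) = real N - 2 - real j" using that False by (simp add: L_def)
      have "x + j + a + real (N-2-j) = C" unfolding N_j C_def by simp
      moreover have "esym_ap k (x + j) (N-2-j+1-2*k) / (x + j + a + real (N-2-j))^(2*k) \<le> factorial_moment a k (N-2-j) (x + j)"
        using Suc.prems by (intro Suc.IH) auto
      ultimately have "esym_ap k (x + j) (N-2-j+1-2*k) \<le> C^(2*k) * factorial_moment a k (N-2-j) (x + j)"
        using C0 by (simp add: divide_le_eq mult.commute)
      moreover have "esym_ap k (x + j + 1) (L - 1 - j) \<le> esym_ap k (x + j) (N-2-j+1-2*k)"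
        using esym_ap_shift_le[of "x + j" k "L - 1 - j"] that Suc.prems by (simp add: L_def Suc_diff_Suc add.commute)
      ultimately show ?thesis using Suc.prems by (simp add: mult_left_mono mult.left_commute)
    qed
    have "esym_ap (Suc k) x L \<le> (\<Sum>j<L. C^(2*k) * ((x + j) * factorial_moment a k (N-2-j) (x + j)))"
      unfolding esym_ap_Suc_eq_sum using summand by (intro sum_mono) (simp add: algebra_simps)
    also have "\<dots> \<le> (\<Sum>j<N-1. C^(2*k) * ((x + j) * factorial_moment a k (N-2-j) (x + j)))"
      using Suc.prems C0 by (intro sum_mono2) (auto simp: L_def intro!: mult_nonneg_nonneg factorial_moment_nonneg)
    also have "\<dots> = C^(2*k) * D * factorial_moment a (Suc k) N x"
      unfolding sum_distrib_left[symmetric] using False C0 by (simp add: D_def C_def)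
    also have "\<dots> \<le> (x + a + real N)^(2 * Suc k) * factorial_moment a (Suc k) N x"
    proof (rule mult_right_mono)
      have "C^(2*k) * D \<le> (x + a + real N)^(2*k) * (x + a + real N)^2"
        unfolding D_def C_def power2_eq_square using C0 Suc.prems
        by (intro mult_mono power_mono) (auto simp: C_def)
      then show "C^(2*k) * D \<le> (x + a + real N)^(2 * Suc k)"
        by (simp add: power_add power2_eq_square mult_ac)
    qed (use Suc.prems factorial_moment_nonneg[of x a "Suc k" N] in simp)
    finally show ?thesis
      using Suc.prems unfolding L_def by (simp add: divide_le_eq mult.commute del: factorial_moment.simps)
  qed (use Suc.prems in \<open>simp add: factorial_moment_nonneg\<close>)
qed simp

lemma tendsto_ap_sum_ratio_upper:
  "(\<lambda>N. ap_sum x (N-1) / (x + a + real N - 2 * real k)^2) \<longlonglongrightarrow> 1/2"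
proof (rule Lim_transform_eventually)
  show "(\<lambda>N::nat. ((real N - 1) * x + (real N - 1) * (real N - 2) / 2) / (x + a + real N - 2 * real k)^2)
      \<longlonglongrightarrow> 1/2"
    by real_asymp
  show "\<forall>\<^sub>F N in sequentially. ((real N - 1) * x + (real N - 1) * (real N - 2) / 2) / (x + a + real N - 2 * real k)^2
      = ap_sum x (N-1) / (x + a + real N - 2 * real k)^2"
    using eventually_ge_at_top[of 1] by eventually_elim (simp add: ap_sum_eq algebra_simps)
qed

lemma tendsto_ap_sum_ratio_lower:
  "(\<lambda>N. (ap_sum x (N+1-2*k) - real k * (x + real (N+1-2*k))) / (x + a + real N)^2) \<longlonglongrightarrow> 1/2"
proof (rule Lim_transform_eventually)
  define M where "M N = real N + 1 - 2 * real k" for N :: nat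
  show "(\<lambda>N. (M N * x + M N * (M N - 1) / 2 - real k * (x + M N)) / (x + a + real N)^2) \<longlonglongrightarrow> 1/2"
    unfolding M_def by real_asymp
  show "\<forall>\<^sub>F N in sequentially. (M N * x + M N * (M N - 1) / 2 - real k * (x + M N)) / (x + a + real N)^2
      = (ap_sum x (N+1-2*k) - real k * (x + real (N+1-2*k))) / (x + a + real N)^2"
    using eventually_ge_at_top[of "2*k"] by eventually_elim (simp add: M_def ap_sum_eq algebra_simps)
qed

lemma factorial_moment_ge_ratio:
  assumes "0 \<le> x" "0 < a"
  shows "(max 0 ((ap_sum x (N+1-2*k) - real k * (x + real (N+1-2*k))) / (x + a + real N)^2))^k / fact k
    \<le> factorial_moment a k N x"
proof -
  let ?s = "ap_sum x (N+1-2*k) - real k * (x + real (N+1-2*k))"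
  have c0: "0 < (x + a + real N)^2" using assms by simp
  then have "max 0 (?s / (x + a + real N)^2) = max 0 ?s / (x + a + real N)^2"
    by (auto simp: max_def zero_le_divide_iff)
  then have "(max 0 (?s / (x + a + real N)^2))^k / fact k = (max 0 ?s)^k / fact k / ((x + a + real N)^2)^k"
    by (simp add: power_divide)
  also have "\<dots> \<le> esym_ap k x (N+1-2*k) / ((x + a + real N)^2)^k"
    using assms c0 by (intro divide_right_mono esym_ap_ge) auto
  also have "\<dots> \<le> factorial_moment a k N x"
    using factorial_moment_ge[OF assms, of k N] by (simp add: power_mult)
  finally show ?thesis .
qed

lemma factorial_moment_le_ratio:
  assumes "0 \<le> x" "0 < a" "2 * k < N"
  shows "factorial_moment a k N x \<le> (ap_sum x (N-1) / (x + a + real N - 2 * real k)^2)^k / fact k"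
proof -
  have B0: "0 < x + a + real N - 2 * real k" using assms by simp
  have "factorial_moment a k N x \<le> esym_ap k x (N-1) / (x + a + real N - 2 * real k)^(2*k)"
    using assms by (intro factorial_moment_le) auto
  also have "\<dots> \<le> (ap_sum x (N-1))^k / fact k / (x + a + real N - 2 * real k)^(2*k)"
    using assms B0 by (intro divide_right_mono esym_ap_le) auto
  also have "\<dots> = (ap_sum x (N-1) / (x + a + real N - 2 * real k)^2)^k / fact k"
    by (simp add: power_divide power_mult)
  finally show ?thesis .
qed

lemma factorial_moment_tendsto:
  assumes "0 < x" "0 < a"
  shows "(\<lambda>N. factorial_moment a k N x) \<longlonglongrightarrow> (1/2)^k / fact k"
proof (rule tendsto_sandwich)
  let ?r = "\<lambda>N. (ap_sum x (N+1-2*k) - real k * (x + real (N+1-2*k))) / (x + a + real N)^2"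
  have "(\<lambda>N. max 0 (?r N)) \<longlonglongrightarrow> max 0 (1/2)"
    by (intro tendsto_max tendsto_const tendsto_ap_sum_ratio_lower)
  then have "(\<lambda>N. max 0 (?r N)) \<longlonglongrightarrow> 1/2" by simp
  then show "(\<lambda>N. (max 0 (?r N))^k / fact k) \<longlonglongrightarrow> (1/2)^k / fact k"
    by (intro tendsto_divide tendsto_power tendsto_const) simp_all
  show "(\<lambda>N. (ap_sum x (N-1) / (x + a + real N - 2 * real k)^2)^k / fact k) \<longlonglongrightarrow> (1/2)^k / fact k"
    by (intro tendsto_divide tendsto_power tendsto_ap_sum_ratio_upper tendsto_const) simp
  show "\<forall>\<^sub>F N in sequentially. (max 0 (?r N))^k / fact k \<le> factorial_moment a k N x"
    using assms by (intro always_eventually allI factorial_moment_ge_ratio) auto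
  show "\<forall>\<^sub>F N in sequentially. factorial_moment a k N x
      \<le> (ap_sum x (N-1) / (x + a + real N - 2 * real k)^2)^k / fact k"
    using eventually_gt_at_top[of "2*k"]
    by eventually_elim (rule factorial_moment_le_ratio, use assms in auto)
qed

section \<open>Removing the first column\<close>

lemma UNIV_cell: "(UNIV :: cell set) = {Empty, Alpha, Beta}"
  using cell.exhaust by auto

lemma finite_UNIV_cell: "finite (UNIV :: cell set)"
  unfolding UNIV_cell by simp

lemma finite_fillings: "finite X \<Longrightarrow> finite {c :: 'a \<Rightarrow> cell. \<forall>i. i \<notin> X \<longrightarrow> c i = Empty}"
  by (rule finite_subset[OF _ finite_set_of_finite_funs[OF _ finite_UNIV_cell, of X Empty]]) auto

lemma finite_boxes: "finite {b. is_box n b}"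
  by (rule finite_subset[of _ "{0..n+1} \<times> {0..n+1}"]) (auto simp: is_box_def)

lemma finite_staircase: "finite (staircase n)"
  by (rule finite_subset[OF _ finite_fillings[OF finite_boxes]]) (auto simp: staircase_def)

lemma staircaseD:
  assumes "T \<in> staircase n"
  shows staircase_outside: "\<And>b. \<not> is_box n b \<Longrightarrow> T b = Empty"
    and staircase_above_Alpha: "\<And>i j i'. is_box n (i, j) \<Longrightarrow> T (i, j) = Alpha \<Longrightarrow> 1 \<le> i' \<Longrightarrow> i' < i \<Longrightarrow> T (i', j) = Empty"
    and staircase_left_of_Beta: "\<And>i j j'. is_box n (i, j) \<Longrightarrow> T (i, j) = Beta \<Longrightarrow> 1 \<le> j' \<Longrightarrow> j' < j \<Longrightarrow> T (i, j') = Empty"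
    and staircase_diagonal: "\<And>i j. is_box n (i, j) \<Longrightarrow> i + j = n + 1 \<Longrightarrow> T (i, j) \<noteq> Empty"
  using assms unfolding staircase_def mem_Collect_eq by blast+

lemma staircase_column_0: "T \<in> staircase n \<Longrightarrow> T (i, 0) = Empty"
  using staircase_outside[of T n "(i, 0)"] by (simp add: is_box_def)

definition add_column :: "(nat \<Rightarrow> cell) \<Rightarrow> (nat \<times> nat \<Rightarrow> cell) \<Rightarrow> (nat \<times> nat \<Rightarrow> cell)" where
  "add_column c T = (\<lambda>(i,j). if j = 0 then Empty else if j = 1 then c i else T (i, j - 1))"

definition first_column :: "(nat \<times> nat \<Rightarrow> cell) \<Rightarrow> (nat \<Rightarrow> cell)" where
  "first_column S = (\<lambda>i. S (i, 1))"

definition drop_first_column :: "(nat \<times> nat \<Rightarrow> cell) \<Rightarrow> (nat \<times> nat \<Rightarrow> cell)" where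
  "drop_first_column S = (\<lambda>(i,j). if j = 0 then Empty else S (i, Suc j))"

definition beta_free_rows :: "nat \<Rightarrow> (nat \<times> nat \<Rightarrow> cell) \<Rightarrow> nat set" where
  "beta_free_rows n T = {i. 1 \<le> i \<and> i \<le> n \<and> (\<forall>j. T (i,j) \<noteq> Beta)}"

text \<open>The columns that can be put in front of a tableau of size \<open>n\<close> whose rows without \<open>\<beta>\<close>
  are \<open>R\<close>: row \<open>n + 1\<close> holds the new diagonal box.\<close>
definition first_columns :: "nat \<Rightarrow> nat set \<Rightarrow> (nat \<Rightarrow> cell) set" where
  "first_columns n R = {c. (\<forall>i. i \<notin> R \<and> i \<noteq> Suc n \<longrightarrow> c i = Empty) \<and> c (Suc n) \<noteq> Empty \<and>
                  (\<forall>i. c i = Alpha \<longrightarrow> (\<forall>i'<i. c i' = Empty))}"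

lemma add_column_apply [simp]:
  "add_column c T (i, 0) = Empty" "add_column c T (i, Suc j) = (if j = 0 then c i else T (i, j))"
  by (simp_all add: add_column_def)

lemma beta_free_rows_subset: "beta_free_rows n T \<subseteq> {1..n}"
  unfolding beta_free_rows_def by auto

lemma finite_beta_free_rows: "finite (beta_free_rows n T)"
  using beta_free_rows_subset by (rule finite_subset) simp

lemma first_columns_support: "c \<in> first_columns n R \<Longrightarrow> c i \<noteq> Empty \<Longrightarrow> i \<in> insert (Suc n) R"
  unfolding first_columns_def by auto

lemma finite_first_columns: "finite R \<Longrightarrow> finite (first_columns n R)"
  by (rule finite_subset[OF _ finite_fillings[of "insert (Suc n) R"]]) (auto simp: first_columns_def)

lemma add_column_in_staircase:
  assumes T: "T \<in> staircase n" and c: "c \<in> first_columns n (beta_free_rows n T)"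
  shows "add_column c T \<in> staircase (Suc n)"
proof -
  have c_Empty: "c i = Empty" if "i \<noteq> Suc n" "i = 0 \<or> n < i \<or> (\<exists>j. T (i, j) = Beta)" for i
    using c that unfolding first_columns_def beta_free_rows_def by auto
  have c_Alpha: "c i' = Empty" if "c i = Alpha" "i' < i" for i i'
    using c that unfolding first_columns_def by auto
  show ?thesis unfolding staircase_def
  proof (intro CollectI conjI allI impI)
    fix b :: "nat \<times> nat"
    obtain i j where b: "b = (i, j)" by fastforce
    assume "\<not> is_box (Suc n) b"
    then show "add_column c T b = Empty"
      unfolding b using c_Empty[of i] staircase_outside[OF T, of "(i, j - 1)"]
      by (induct j rule: induct_nat_012) (auto simp: is_box_def)
  next
    fix i j i' assume "is_box (Suc n) (i, j) \<and> add_column c T (i, j) = Alpha" "1 \<le> i' \<and> i' < i"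
    then show "add_column c T (i', j) = Empty"
      using c_Alpha staircase_above_Alpha[OF T, of i "j - 1" i']
      by (induct j rule: induct_nat_012) (auto simp: is_box_def)
  next
    fix i j j' assume "is_box (Suc n) (i, j) \<and> add_column c T (i, j) = Beta" "1 \<le> j' \<and> j' < j"
    then show "add_column c T (i, j') = Empty"
      using c_Empty[of i] staircase_left_of_Beta[OF T, of i "j - 1" "j' - 1"]
      by (induct j rule: induct_nat_012; induct j' rule: induct_nat_012) (auto simp: is_box_def)
  next
    fix i j assume "is_box (Suc n) (i, j) \<and> i + j = Suc n + 1"
    then show "add_column c T (i, j) \<noteq> Empty"
      using c staircase_diagonal[OF T, of i "j - 1"]
      by (induct j rule: induct_nat_012) (auto simp: first_columns_def is_box_def)
  qed
qed

lemma first_column_in_first_columns: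
  assumes T: "T \<in> staircase n" and S: "add_column c T \<in> staircase (Suc n)"
  shows "c \<in> first_columns n (beta_free_rows n T)"
  unfolding first_columns_def
proof (intro CollectI conjI allI impI)
  fix i assume i: "i \<notin> beta_free_rows n T \<and> i \<noteq> Suc n"
  show "c i = Empty"
  proof (cases "1 \<le> i \<and> i \<le> n")
    case True
    with i obtain j where "T (i, j) = Beta" unfolding beta_free_rows_def by auto
    moreover from this have "is_box n (i, j)" using staircase_outside[OF T] by fastforce
    ultimately show ?thesis
      using staircase_left_of_Beta[OF S, of i "Suc j" 1] by (auto simp: is_box_def)
  next
    case False
    then show ?thesis using i staircase_outside[OF S, of "(i, 1)"] by (auto simp: is_box_def)
  qed
next
  show "c (Suc n) \<noteq> Empty"
    using staircase_diagonal[OF S, of "Suc n" 1] by (simp add: is_box_def)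
next
  fix i i' assume "c i = Alpha" "i' < i"
  moreover from this have "is_box (Suc n) (i, 1)" using staircase_outside[OF S, of "(i, 1)"] by auto
  ultimately show "c i' = Empty"
    using staircase_above_Alpha[OF S, of i 1 i'] staircase_outside[OF S, of "(0, 1)"]
    by (cases "i' = 0") (auto simp: is_box_def)
qed

lemma drop_first_column_in_staircase:
  assumes S: "S \<in> staircase (Suc n)"
  shows "drop_first_column S \<in> staircase n"
  unfolding staircase_def
proof (intro CollectI conjI allI impI)
  fix b assume "\<not> is_box n b"
  then show "drop_first_column S b = Empty"
    using staircase_outside[OF S, of "(fst b, Suc (snd b))"]
    by (auto simp: drop_first_column_def is_box_def split: prod.splits)
next
  fix i j i' assume "is_box n (i, j) \<and> drop_first_column S (i, j) = Alpha" "1 \<le> i' \<and> i' < i"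
  then show "drop_first_column S (i', j) = Empty"
    using staircase_above_Alpha[OF S, of i "Suc j" i'] by (auto simp: drop_first_column_def is_box_def)
next
  fix i j j' assume "is_box n (i, j) \<and> drop_first_column S (i, j) = Beta" "1 \<le> j' \<and> j' < j"
  then show "drop_first_column S (i, j') = Empty"
    using staircase_left_of_Beta[OF S, of i "Suc j" "Suc j'"] by (auto simp: drop_first_column_def is_box_def)
next
  fix i j assume "is_box n (i, j) \<and> i + j = n + 1"
  then show "drop_first_column S (i, j) \<noteq> Empty"
    using staircase_diagonal[OF S, of i "Suc j"] by (auto simp: drop_first_column_def is_box_def)
qed

lemma first_column_add_column [simp]: "first_column (add_column c T) = c"
  by (simp add: first_column_def)

lemma drop_first_column_add_column:
  "T \<in> staircase n \<Longrightarrow> drop_first_column (add_column c T) = T"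
  by (auto simp: drop_first_column_def staircase_column_0 fun_eq_iff)

lemma add_column_first_column:
  "S \<in> staircase (Suc n) \<Longrightarrow> add_column (first_column S) (drop_first_column S) = S"
  by (auto simp: add_column_def first_column_def drop_first_column_def staircase_column_0 fun_eq_iff)

lemma bij_betw_add_column:
  "bij_betw (\<lambda>(T, c). add_column c T) (SIGMA T:staircase n. first_columns n (beta_free_rows n T)) (staircase (Suc n))"
proof (rule bij_betw_byWitness[where f' = "\<lambda>S. (drop_first_column S, first_column S)"])
  show "(\<lambda>S. (drop_first_column S, first_column S)) ` staircase (Suc n)
      \<subseteq> (SIGMA T:staircase n. first_columns n (beta_free_rows n T))"
    using drop_first_column_in_staircase first_column_in_first_columns add_column_first_column
    by fastforce
qed (auto simp: drop_first_column_add_column add_column_first_column add_column_in_staircase)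

lemma sum_staircase_Suc:
  "(\<Sum>S\<in>staircase (Suc n). f S) = (\<Sum>T\<in>staircase n. \<Sum>c\<in>first_columns n (beta_free_rows n T). f (add_column c T))"
proof -
  have "finite (first_columns n (beta_free_rows n T))" for T
    by (intro finite_first_columns finite_beta_free_rows)
  then show ?thesis
    using sum.reindex_bij_betw[OF bij_betw_add_column, of f, symmetric] finite_staircase
    by (simp add: sum.Sigma split_def)
qed

lemma num_sym_eq_card: "T \<in> staircase n \<Longrightarrow> v \<noteq> Empty \<Longrightarrow> num_sym n v T = card {b. T b = v}"
  unfolding num_sym_def by (metis (lifting) staircase_outside)

lemma finite_cells: "T \<in> staircase n \<Longrightarrow> v \<noteq> Empty \<Longrightarrow> finite {b. T b = v}"
  by (rule finite_subset[OF _ finite_boxes[of n]]) (use staircase_outside[of T n] in blast)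

lemma cells_add_column:
  assumes "T \<in> staircase n" "v \<noteq> Empty"
  shows "{b. add_column c T b = v} = (\<lambda>i. (i, 1)) ` {i. c i = v} \<union> (\<lambda>(i, j). (i, Suc j)) ` {b. T b = v}"
proof (intro equalityI subsetI)
  fix b assume "b \<in> {b. add_column c T b = v}"
  moreover obtain i j where "b = (i, j)" by fastforce
  ultimately show "b \<in> (\<lambda>i. (i, 1)) ` {i. c i = v} \<union> (\<lambda>(i, j). (i, Suc j)) ` {b. T b = v}"
    using assms(2) by (cases j) (auto split: if_splits)
next
  fix b assume "b \<in> (\<lambda>i. (i, 1)) ` {i. c i = v} \<union> (\<lambda>(i, j). (i, Suc j)) ` {b. T b = v}"
  then show "b \<in> {b. add_column c T b = v}"
    using assms staircase_column_0[OF assms(1)] by auto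
qed

lemma num_sym_add_column:
  assumes T: "T \<in> staircase n" and c: "c \<in> first_columns n (beta_free_rows n T)" and v: "v \<noteq> Empty"
  shows "num_sym (Suc n) v (add_column c T) = num_sym n v T + card {i. c i = v}"
proof -
  have "{i. c i = v} \<subseteq> insert (Suc n) (beta_free_rows n T)"
    using first_columns_support[OF c] v by auto
  then have fin: "finite {i. c i = v}"
    by (rule finite_subset) (simp add: finite_beta_free_rows)
  have "card {b. add_column c T b = v} = card {i. c i = v} + card {b. T b = v}"
    unfolding cells_add_column[OF T v]
  proof (subst card_Un_disjoint)
    show "card ((\<lambda>i. (i, 1::nat)) ` {i. c i = v}) + card ((\<lambda>(i, j). (i, Suc j)) ` {b. T b = v})
        = card {i. c i = v} + card {b. T b = v}"
      by (simp add: card_image inj_on_def)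
  qed (use fin finite_cells[OF T v] staircase_column_0[OF T] v in auto)
  then show ?thesis
    using num_sym_eq_card[OF add_column_in_staircase[OF T c] v] num_sym_eq_card[OF T v] by simp
qed

lemma beta_free_rows_add_column:
  assumes T: "T \<in> staircase n"
  shows "beta_free_rows (Suc n) (add_column c T) = {i \<in> insert (Suc n) (beta_free_rows n T). c i \<noteq> Beta}"
proof -
  have row: "(\<forall>j. add_column c T (i, j) \<noteq> Beta) \<longleftrightarrow> c i \<noteq> Beta \<and> (\<forall>j. T (i, j) \<noteq> Beta)" for i
  proof -
    have split: "(\<forall>j. P j) \<longleftrightarrow> P 0 \<and> (\<forall>j. P (Suc j))" for P by (metis nat.exhaust)
    show ?thesis
      using split[of "\<lambda>j. add_column c T (i, j) \<noteq> Beta"] split[of "\<lambda>j. T (i, j) \<noteq> Beta"]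
        staircase_column_0[OF T, of i]
      by auto
  qed
  have "T (Suc n, j) \<noteq> Beta" for j
    using staircase_outside[OF T, of "(Suc n, j)"] by (simp add: is_box_def)
  then show ?thesis
    unfolding beta_free_rows_def row by auto
qed

lemma A_count_add_column:
  assumes c: "c \<in> first_columns n (beta_free_rows n T)"
  shows "A_count (Suc n) (add_column c T) = A_count n T + (if c n = Alpha then 1 else 0)"
proof -
  let ?D = "\<lambda>n T. {j. 1 \<le> j \<and> j \<le> n - 1 \<and> T (n - j, j) = Alpha}"
  have "c 0 = Empty" using first_columns_support[OF c, of 0] beta_free_rows_subset[of n T] by force
  then have "?D (Suc n) (add_column c T) = (if c n = Alpha then {1} else {}) \<union> Suc ` ?D n T"
  proof (intro equalityI subsetI)
    fix j assume "j \<in> ?D (Suc n) (add_column c T)"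
    then show "j \<in> (if c n = Alpha then {1} else {}) \<union> Suc ` ?D n T"
      by (cases j) (auto simp: image_iff split: if_splits)
  next
    fix j assume "j \<in> (if c n = Alpha then {1} else {}) \<union> Suc ` ?D n T"
    with \<open>c 0 = Empty\<close> show "j \<in> ?D (Suc n) (add_column c T)"
      by (cases n) (auto split: if_splits)
  qed
  moreover have "finite (?D n T)" by (rule finite_subset[of _ "{..n}"]) auto
  ultimately show ?thesis
    unfolding A_count_def by (simp add: card_image image_iff)
qed

section \<open>Weights of first columns\<close>

text \<open>The weight of a cell of a new first column: an empty cell or an \<open>\<alpha>\<close> keeps its row free of
  \<open>\<beta>\<close>'s, which the extra variable \<open>u\<close> records.\<close>
definition cell_weight :: "real \<Rightarrow> real \<Rightarrow> real \<Rightarrow> cell \<Rightarrow> real" where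
  "cell_weight \<alpha> \<beta> u v = (case v of Empty \<Rightarrow> u | Alpha \<Rightarrow> \<alpha> * u | Beta \<Rightarrow> \<beta>)"

lemma cell_weight_simps [simp]:
  "cell_weight \<alpha> \<beta> u Empty = u" "cell_weight \<alpha> \<beta> u Alpha = \<alpha> * u" "cell_weight \<alpha> \<beta> u Beta = \<beta>"
  unfolding cell_weight_def by simp_all

definition column_weight :: "real \<Rightarrow> real \<Rightarrow> real \<Rightarrow> nat \<Rightarrow> nat set \<Rightarrow> (nat \<Rightarrow> cell) \<Rightarrow> real" where
  "column_weight \<alpha> \<beta> u n R c = (\<Prod>i\<in>insert (Suc n) R. cell_weight \<alpha> \<beta> u (c i))"

lemma prod_cell_weight:
  assumes "finite X"
  shows "(\<Prod>i\<in>X. cell_weight \<alpha> \<beta> u (c i))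
    = \<alpha> ^ card {i\<in>X. c i = Alpha} * \<beta> ^ card {i\<in>X. c i = Beta} * u ^ card {i\<in>X. c i \<noteq> Beta}"
  using assms
proof (induction X rule: finite_induct)
  case (insert x X)
  have "{i \<in> insert x X. P i} = (if P x then insert x {i \<in> X. P i} else {i \<in> X. P i})" for P
    by auto
  with insert show ?case by (cases "c x") (simp_all add: card_insert_disjoint)
qed simp

lemma wt_add_column:
  assumes T: "T \<in> staircase n" and c: "c \<in> first_columns n (beta_free_rows n T)"
  shows "wt \<alpha> \<beta> (Suc n) (add_column c T) * u ^ card (beta_free_rows (Suc n) (add_column c T))
    = wt \<alpha> \<beta> n T * column_weight \<alpha> \<beta> u n (beta_free_rows n T) c"
proof -
  let ?X = "insert (Suc n) (beta_free_rows n T)"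
  have "{i\<in>?X. c i = v} = {i. c i = v}" if "v \<noteq> Empty" for v
    using first_columns_support[OF c] that by auto
  then have "column_weight \<alpha> \<beta> u n (beta_free_rows n T) c
      = \<alpha> ^ card {i. c i = Alpha} * \<beta> ^ card {i. c i = Beta} * u ^ card {i\<in>?X. c i \<noteq> Beta}"
    unfolding column_weight_def by (simp add: prod_cell_weight finite_beta_free_rows)
  then show ?thesis
    by (simp add: wt_def beta_free_rows_add_column[OF T] num_sym_add_column[OF T c] power_add mult_ac)
qed

definition alpha_free_columns :: "nat \<Rightarrow> nat set \<Rightarrow> (nat \<Rightarrow> cell) set" where
  "alpha_free_columns n R = {c \<in> first_columns n R. \<forall>i. c i \<noteq> Alpha}"

lemma first_columns_empty:
  "first_columns n {} = {(\<lambda>_. Empty)(Suc n := Alpha), (\<lambda>_. Empty)(Suc n := Beta)}"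
proof (intro equalityI subsetI)
  fix c assume c: "c \<in> first_columns n {}"
  then have "c = (\<lambda>_. Empty)(Suc n := c (Suc n))" "c (Suc n) \<noteq> Empty"
    unfolding first_columns_def by auto
  then show "c \<in> {(\<lambda>_. Empty)(Suc n := Alpha), (\<lambda>_. Empty)(Suc n := Beta)}"
    by (cases "c (Suc n)") auto
qed (auto simp: first_columns_def)

lemma alpha_free_columns_empty: "alpha_free_columns n {} = {(\<lambda>_. Empty)(Suc n := Beta)}"
  unfolding alpha_free_columns_def first_columns_empty by (auto simp: fun_eq_iff split: if_splits)

lemma first_columns_insert_Empty:
  "r \<notin> insert (Suc n) R \<Longrightarrow> {c \<in> first_columns n (insert r R). c r = Empty} = first_columns n R"
  unfolding first_columns_def by auto

text \<open>A nonempty cell in the topmost admissible row \<open>r\<close> is the topmost nonempty cell, so the rest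
  of the column must be free of \<open>\<alpha>\<close>.\<close>
lemma first_columns_insert_nonempty:
  assumes r: "\<forall>i\<in>insert (Suc n) R. r < i" and v: "v \<noteq> Empty"
  shows "{c \<in> first_columns n (insert r R). c r = v} = (\<lambda>c. c(r := v)) ` alpha_free_columns n R"
proof -
  have below: "i \<notin> insert r R \<and> i \<noteq> Suc n" if "i < r" for i
    using r that by auto
  show ?thesis
  proof (intro equalityI subsetI)
    fix c assume c: "c \<in> {c \<in> first_columns n (insert r R). c r = v}"
    have "c i \<noteq> Alpha" if "i \<noteq> r" for i
    proof (cases "i < r")
      case True
      then show ?thesis using c below unfolding first_columns_def by auto
    next
      case False
      then show ?thesis using c v \<open>i \<noteq> r\<close> unfolding first_columns_def by auto
    qed
    with c r have "c(r := Empty) \<in> alpha_free_columns n R"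
      unfolding alpha_free_columns_def first_columns_def by auto
    moreover have "c = (c(r := Empty))(r := v)" using c by auto
    ultimately show "c \<in> (\<lambda>c. c(r := v)) ` alpha_free_columns n R" by blast
  next
    fix c' assume "c' \<in> (\<lambda>c. c(r := v)) ` alpha_free_columns n R"
    then obtain c where "c \<in> alpha_free_columns n R" "c' = c(r := v)" by auto
    then show "c' \<in> {c \<in> first_columns n (insert r R). c r = v}"
      using r below unfolding alpha_free_columns_def first_columns_def by auto
  qed
qed

lemma column_weight_insert:
  assumes "finite R" "r \<notin> insert (Suc n) R"
  shows "column_weight \<alpha> \<beta> u n (insert r R) (c(r := v)) = cell_weight \<alpha> \<beta> u v * column_weight \<alpha> \<beta> u n R c"
proof -
  have "insert (Suc n) (insert r R) = insert r (insert (Suc n) R)" by auto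
  moreover have "(\<Prod>i\<in>insert (Suc n) R. cell_weight \<alpha> \<beta> u ((c(r := v)) i)) = column_weight \<alpha> \<beta> u n R c"
    unfolding column_weight_def using assms(2) by (intro prod.cong) auto
  ultimately show ?thesis
    unfolding column_weight_def using assms by simp
qed

lemma sum_split_by_cell:
  assumes "finite C"
  shows "sum f C = sum f {c\<in>C. c r = Empty} + sum f {c\<in>C. c r = Beta} + sum f {c\<in>C. c r = Alpha}"
  using sum.group[OF assms finite_UNIV_cell subset_UNIV, where g = "\<lambda>c. c r" and h = f]
  by (simp add: UNIV_cell add_ac)

lemma inj_on_fun_upd_Empty: "inj_on (\<lambda>c. c(r := v)) {c. c r = Empty}"
  by (rule inj_onI) (simp add: fun_eq_iff, metis)

lemma column_weight_insert_Empty: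
  assumes "finite R" "r \<notin> insert (Suc n) R" "c r = Empty"
  shows "column_weight \<alpha> \<beta> u n (insert r R) c = u * column_weight \<alpha> \<beta> u n R c"
  using column_weight_insert[OF assms(1,2), where c = c and v = Empty] assms(3)
  by (simp add: fun_upd_idem)

lemma sum_column_weight_top_nonempty:
  assumes "finite R" and r: "\<forall>i\<in>insert (Suc n) R. r < i" and v: "v \<noteq> Empty"
  shows "(\<Sum>c\<in>{c \<in> first_columns n (insert r R). c r = v}. column_weight \<alpha> \<beta> u n (insert r R) c)
    = cell_weight \<alpha> \<beta> u v * (\<Sum>c\<in>alpha_free_columns n R. column_weight \<alpha> \<beta> u n R c)"
proof -
  have r_notin: "r \<notin> insert (Suc n) R" using r by auto
  then have "alpha_free_columns n R \<subseteq> {c. c r = Empty}"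
    unfolding alpha_free_columns_def first_columns_def by auto
  then have "inj_on (\<lambda>c. c(r := v)) (alpha_free_columns n R)"
    by (rule inj_on_subset[OF inj_on_fun_upd_Empty])
  then show ?thesis
    unfolding first_columns_insert_nonempty[OF r v] sum_distrib_left
    by (simp add: sum.reindex column_weight_insert[OF \<open>finite R\<close> r_notin])
qed

lemma alpha_free_columns_sum:
  assumes "finite R" "R \<subseteq> {1..n}"
  shows "(\<Sum>c\<in>alpha_free_columns n R. column_weight \<alpha> \<beta> u n R c) = \<beta> * (u + \<beta>) ^ card R"
  using assms
proof (induction R rule: finite_linorder_min_induct)
  case empty
  then show ?case by (simp add: alpha_free_columns_empty column_weight_def)
next
  case (insert r R)
  let ?W = "column_weight \<alpha> \<beta> u n (insert r R)" and ?C = "alpha_free_columns n (insert r R)"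
  let ?N = "\<Sum>c\<in>alpha_free_columns n R. column_weight \<alpha> \<beta> u n R c"
  have r: "\<forall>i\<in>insert (Suc n) R. r < i" and r_notin: "r \<notin> insert (Suc n) R"
    using insert by auto
  have r_Empty: "c r = Empty" if "c \<in> first_columns n R" for c
    using first_columns_support[OF that, of r] r_notin by blast
  have "finite ?C"
    using insert.hyps(1) unfolding alpha_free_columns_def by (simp add: finite_first_columns)
  then have "sum ?W ?C = sum ?W {c \<in> ?C. c r = Empty} + sum ?W {c \<in> ?C. c r = Beta} + sum ?W {c \<in> ?C. c r = Alpha}"
    by (rule sum_split_by_cell)
  also have "sum ?W {c \<in> ?C. c r = Empty} = u * ?N"
    using first_columns_insert_Empty[OF r_notin]
    unfolding alpha_free_columns_def sum_distrib_left
    by (intro sum.cong) (auto simp: column_weight_insert_Empty[OF \<open>finite R\<close> r_notin r_Empty])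
  also have "{c \<in> ?C. c r = Beta} = {c \<in> first_columns n (insert r R). c r = Beta}"
    using first_columns_insert_nonempty[OF r, of Beta]
    unfolding alpha_free_columns_def by (auto split: if_splits)
  also have "sum ?W \<dots> = \<beta> * ?N"
    using sum_column_weight_top_nonempty[OF \<open>finite R\<close> r, of Beta] by simp
  also have "{c \<in> ?C. c r = Alpha} = {}"
    unfolding alpha_free_columns_def by auto
  finally have "sum ?W ?C = (u + \<beta>) * (\<beta> * (u + \<beta>) ^ card R)"
    using insert by (simp add: algebra_simps)
  then show ?case
    using insert r_notin by (simp add: card_insert_disjoint)
qed

lemma first_columns_sum:
  assumes "finite R" "R \<subseteq> {1..n}"
  shows "(\<Sum>c\<in>first_columns n R. column_weight \<alpha> \<beta> u n R c) = (\<beta> + \<alpha> * u) * (u + \<beta>) ^ card R"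
  using assms
proof (induction R rule: finite_linorder_min_induct)
  case empty
  have "(\<lambda>_. Empty)(Suc n := Alpha) \<noteq> (\<lambda>_. Empty)(Suc n := Beta)" by (simp add: fun_eq_iff)
  then show ?case by (simp add: first_columns_empty column_weight_def)
next
  case (insert r R)
  let ?W = "column_weight \<alpha> \<beta> u n (insert r R)" and ?C = "first_columns n (insert r R)"
  let ?N = "\<Sum>c\<in>alpha_free_columns n R. column_weight \<alpha> \<beta> u n R c"
  have r: "\<forall>i\<in>insert (Suc n) R. r < i" and r_notin: "r \<notin> insert (Suc n) R"
    using insert by auto
  have r_Empty: "c r = Empty" if "c \<in> first_columns n R" for c
    using first_columns_support[OF that, of r] r_notin by blast
  have "finite ?C"
    using insert.hyps(1) by (simp add: finite_first_columns)
  then have "sum ?W ?C = sum ?W {c \<in> ?C. c r = Empty} + sum ?W {c \<in> ?C. c r = Beta} + sum ?W {c \<in> ?C. c r = Alpha}"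
    by (rule sum_split_by_cell)
  also have "sum ?W {c \<in> ?C. c r = Empty} = u * (\<Sum>c\<in>first_columns n R. column_weight \<alpha> \<beta> u n R c)"
    using first_columns_insert_Empty[OF r_notin] unfolding sum_distrib_left
    by (intro sum.cong) (auto simp: column_weight_insert_Empty[OF \<open>finite R\<close> r_notin r_Empty])
  also have "sum ?W {c \<in> ?C. c r = Beta} = \<beta> * ?N"
    using sum_column_weight_top_nonempty[OF \<open>finite R\<close> r, of Beta] by simp
  also have "sum ?W {c \<in> ?C. c r = Alpha} = \<alpha> * u * ?N"
    using sum_column_weight_top_nonempty[OF \<open>finite R\<close> r, of Alpha] by simp
  finally have "sum ?W ?C = (u + \<beta>) * ((\<beta> + \<alpha> * u) * (u + \<beta>) ^ card R)"
    using insert alpha_free_columns_sum[of R n \<alpha> \<beta> u] by (simp add: algebra_simps)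
  then show ?case
    using insert r_notin by (simp add: card_insert_disjoint)
qed

lemma first_columns_Alpha_at:
  assumes R: "R \<subseteq> {1..n}"
  shows "{c \<in> first_columns n R. c n = Alpha}
    = (if n \<in> R then {(\<lambda>_. Empty)(n := Alpha, Suc n := Beta)} else {})"
proof (intro equalityI subsetI)
  fix c assume c: "c \<in> {c \<in> first_columns n R. c n = Alpha}"
  then have "n \<in> R" using first_columns_support[of c n R n] by auto
  have "c i = ((\<lambda>_. Empty)(n := Alpha, Suc n := Beta)) i" for i
  proof -
    consider "i < n" | "i = n" | "i = Suc n" | "i > Suc n" by linarith
    then show ?thesis
    proof cases
      case 1
      then show ?thesis using c unfolding first_columns_def by auto
    next
      case 3
      then show ?thesis using c unfolding first_columns_def by (cases "c (Suc n)") force+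
    next
      case 4
      with R have "i \<notin> R" "i \<noteq> Suc n" by auto
      then show ?thesis using c 4 unfolding first_columns_def by auto
    qed (use c in auto)
  qed
  with \<open>n \<in> R\<close> show "c \<in> (if n \<in> R then {(\<lambda>_. Empty)(n := Alpha, Suc n := Beta)} else {})"
    by (auto simp: fun_eq_iff)
next
  fix c assume "c \<in> (if n \<in> R then {(\<lambda>_. Empty)(n := Alpha, Suc n := Beta)} else {})"
  then show "c \<in> {c \<in> first_columns n R. c n = Alpha}" unfolding first_columns_def by (auto split: if_splits)
qed

lemma first_columns_top_not_Beta:
  assumes R: "R \<subseteq> {1..n}"
  shows "{c \<in> first_columns n R. c (Suc n) \<noteq> Beta} = {(\<lambda>_. Empty)(Suc n := Alpha)}"
proof (intro equalityI subsetI)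
  fix c assume c: "c \<in> {c \<in> first_columns n R. c (Suc n) \<noteq> Beta}"
  then have "c (Suc n) = Alpha" unfolding first_columns_def by (cases "c (Suc n)") auto
  with c R have "c i = ((\<lambda>_. Empty)(Suc n := Alpha)) i" for i
    unfolding first_columns_def by (cases "i < Suc n") auto
  then show "c \<in> {(\<lambda>_. Empty)(Suc n := Alpha)}" by (auto simp: fun_eq_iff)
qed (auto simp: first_columns_def)

lemma column_weight_Alpha_at:
  assumes R: "R \<subseteq> {1..n}" and "n \<in> R"
  shows "column_weight \<alpha> \<beta> u n R ((\<lambda>_. Empty)(n := Alpha, Suc n := Beta)) = \<alpha> * \<beta> * u ^ card R"
proof -
  let ?X = "insert (Suc n) R"
  have "finite R" using R by (rule finite_subset) simp
  moreover have "{i\<in>?X. ((\<lambda>_. Empty)(n := Alpha, Suc n := Beta)) i = Alpha} = {n}"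
    "{i\<in>?X. ((\<lambda>_. Empty)(n := Alpha, Suc n := Beta)) i = Beta} = {Suc n}"
    "{i\<in>?X. ((\<lambda>_. Empty)(n := Alpha, Suc n := Beta)) i \<noteq> Beta} = R"
    using assms by auto
  ultimately show ?thesis unfolding column_weight_def by (simp add: prod_cell_weight)
qed

lemma column_weight_Alpha_on_top:
  assumes R: "R \<subseteq> {1..n}"
  shows "column_weight \<alpha> \<beta> u n R ((\<lambda>_. Empty)(Suc n := Alpha)) = \<alpha> * u * u ^ card R"
proof -
  let ?X = "insert (Suc n) R"
  have "finite R" "Suc n \<notin> R" using R by (auto intro: finite_subset)
  moreover have "{i\<in>?X. ((\<lambda>_. Empty)(Suc n := Alpha)) i = Alpha} = {Suc n}"
    "{i\<in>?X. ((\<lambda>_. Empty)(Suc n := Alpha)) i = Beta} = {}"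
    "{i\<in>?X. ((\<lambda>_. Empty)(Suc n := Alpha)) i \<noteq> Beta} = ?X"
    by auto
  ultimately show ?thesis unfolding column_weight_def by (simp add: prod_cell_weight)
qed

section \<open>Generating sums over tableaux\<close>

text \<open>The variable \<open>u\<close> marks the rows without \<open>\<beta>\<close>; at \<open>u = 1\<close> this is the unnormalised
  expectation of \<open>g (A_n)\<close>.\<close>
definition tableau_sum :: "real \<Rightarrow> real \<Rightarrow> nat \<Rightarrow> real \<Rightarrow> (nat \<Rightarrow> real) \<Rightarrow> real" where
  "tableau_sum \<alpha> \<beta> n u g = (\<Sum>T\<in>staircase n. wt \<alpha> \<beta> n T * u ^ card (beta_free_rows n T) * g (A_count n T))"

definition tableau_sum_last_free :: "real \<Rightarrow> real \<Rightarrow> nat \<Rightarrow> real \<Rightarrow> (nat \<Rightarrow> real) \<Rightarrow> real" where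
  "tableau_sum_last_free \<alpha> \<beta> n u g =
    (\<Sum>T\<in>staircase n. wt \<alpha> \<beta> n T * u ^ card (beta_free_rows n T) * (if n \<in> beta_free_rows n T then g (A_count n T) else 0))"

lemma first_columns_sum_shift:
  assumes R: "R \<subseteq> {1..n}"
  shows "(\<Sum>c\<in>first_columns n R. column_weight \<alpha> \<beta> u n R c * g (a + (if c n = Alpha then 1 else 0)))
    = (\<beta> + \<alpha> * u) * (u + \<beta>) ^ card R * g a
      + (if n \<in> R then \<alpha> * \<beta> * u ^ card R * (g (Suc a) - g a) else 0)"
proof -
  let ?W = "column_weight \<alpha> \<beta> u n R" and ?C = "first_columns n R"
  have "finite R" using R by (rule finite_subset) simp
  then have "finite ?C" by (rule finite_first_columns)
  have "(\<Sum>c\<in>?C. ?W c * g (a + (if c n = Alpha then 1 else 0)))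
      = (\<Sum>c\<in>?C. ?W c * g a) + (\<Sum>c\<in>?C. if c n = Alpha then ?W c * (g (Suc a) - g a) else 0)"
    unfolding sum.distrib[symmetric] by (intro sum.cong) (auto simp: algebra_simps)
  also have "(\<Sum>c\<in>?C. ?W c * g a) = (\<beta> + \<alpha> * u) * (u + \<beta>) ^ card R * g a"
    by (simp add: first_columns_sum[OF \<open>finite R\<close> R] flip: sum_distrib_right)
  also have "(\<Sum>c\<in>?C. if c n = Alpha then ?W c * (g (Suc a) - g a) else 0)
      = (\<Sum>c\<in>{c\<in>?C. c n = Alpha}. ?W c * (g (Suc a) - g a))"
    unfolding sum.inter_filter[OF \<open>finite ?C\<close>] ..
  also have "\<dots> = (if n \<in> R then \<alpha> * \<beta> * u ^ card R * (g (Suc a) - g a) else 0)"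
    unfolding first_columns_Alpha_at[OF R] using column_weight_Alpha_at[OF R] by auto
  finally show ?thesis .
qed

lemma first_columns_sum_top_not_Beta:
  fixes a :: nat
  assumes R: "R \<subseteq> {1..n}"
  shows "(\<Sum>c\<in>first_columns n R. if c (Suc n) \<noteq> Beta
      then column_weight \<alpha> \<beta> u n R c * h (a + (if c n = Alpha then 1 else 0)) else 0)
    = \<alpha> * u * u ^ card R * h a"
proof -
  have "finite R" using R by (rule finite_subset) simp
  then show ?thesis
    unfolding sum.inter_filter[OF finite_first_columns[OF \<open>finite R\<close>], symmetric]
      first_columns_top_not_Beta[OF R]
    by (simp add: column_weight_Alpha_on_top[OF R])
qed

lemma tableau_sum_Suc:
  "tableau_sum \<alpha> \<beta> (Suc n) u g
    = (\<beta> + \<alpha> * u) * tableau_sum \<alpha> \<beta> n (u + \<beta>) g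
      + \<alpha> * \<beta> * tableau_sum_last_free \<alpha> \<beta> n u (\<lambda>a. g (Suc a) - g a)"
proof -
  have "tableau_sum \<alpha> \<beta> (Suc n) u g = (\<Sum>T\<in>staircase n. wt \<alpha> \<beta> n T *
      (\<Sum>c\<in>first_columns n (beta_free_rows n T).
        column_weight \<alpha> \<beta> u n (beta_free_rows n T) c * g (A_count n T + (if c n = Alpha then 1 else 0))))"
    unfolding tableau_sum_def sum_staircase_Suc sum_distrib_left
    by (intro sum.cong refl) (simp add: wt_add_column A_count_add_column mult.assoc)
  also have "\<dots> = (\<Sum>T\<in>staircase n. wt \<alpha> \<beta> n T *
      ((\<beta> + \<alpha> * u) * (u + \<beta>) ^ card (beta_free_rows n T) * g (A_count n T)
        + (if n \<in> beta_free_rows n T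
           then \<alpha> * \<beta> * u ^ card (beta_free_rows n T) * (g (Suc (A_count n T)) - g (A_count n T)) else 0)))"
    by (intro sum.cong refl) (simp add: first_columns_sum_shift[OF beta_free_rows_subset])
  also have "\<dots> = (\<beta> + \<alpha> * u) * tableau_sum \<alpha> \<beta> n (u + \<beta>) g
      + \<alpha> * \<beta> * tableau_sum_last_free \<alpha> \<beta> n u (\<lambda>a. g (Suc a) - g a)"
    unfolding tableau_sum_def tableau_sum_last_free_def sum_distrib_left sum.distrib[symmetric]
    by (intro sum.cong refl) (auto simp: algebra_simps)
  finally show ?thesis .
qed

text \<open>Row \<open>n + 1\<close> of a tableau of size \<open>n + 1\<close> consists of the diagonal box of the first column only.\<close>
lemma tableau_sum_last_free_Suc:
  "tableau_sum_last_free \<alpha> \<beta> (Suc n) u h = \<alpha> * u * tableau_sum \<alpha> \<beta> n u h"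
proof -
  have "tableau_sum_last_free \<alpha> \<beta> (Suc n) u h = (\<Sum>T\<in>staircase n. wt \<alpha> \<beta> n T *
      (\<Sum>c\<in>first_columns n (beta_free_rows n T). if c (Suc n) \<noteq> Beta
        then column_weight \<alpha> \<beta> u n (beta_free_rows n T) c * h (A_count n T + (if c n = Alpha then 1 else 0))
        else 0))"
    unfolding tableau_sum_last_free_def sum_staircase_Suc sum_distrib_left
  proof (intro sum.cong refl)
    fix T c assume T: "T \<in> staircase n" and c: "c \<in> first_columns n (beta_free_rows n T)"
    have "Suc n \<in> beta_free_rows (Suc n) (add_column c T) \<longleftrightarrow> c (Suc n) \<noteq> Beta"
      unfolding beta_free_rows_add_column[OF T] by auto
    then show "wt \<alpha> \<beta> (Suc n) (add_column c T) * u ^ card (beta_free_rows (Suc n) (add_column c T)) *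
        (if Suc n \<in> beta_free_rows (Suc n) (add_column c T) then h (A_count (Suc n) (add_column c T)) else 0)
      = wt \<alpha> \<beta> n T * (if c (Suc n) \<noteq> Beta
        then column_weight \<alpha> \<beta> u n (beta_free_rows n T) c * h (A_count n T + (if c n = Alpha then 1 else 0))
        else 0)"
      by (simp add: A_count_add_column[OF c] wt_add_column[OF T c])
  qed
  also have "\<dots> = \<alpha> * u * tableau_sum \<alpha> \<beta> n u h"
    unfolding tableau_sum_def sum_distrib_left[of "\<alpha> * u"]
    by (intro sum.cong refl) (simp add: first_columns_sum_top_not_Beta[OF beta_free_rows_subset] mult_ac)
  finally show ?thesis .
qed

lemma tableau_sum_Suc_Suc:
  "tableau_sum \<alpha> \<beta> (Suc (Suc n)) u g
    = (\<beta> + \<alpha> * u) * tableau_sum \<alpha> \<beta> (Suc n) (u + \<beta>) g + \<alpha> * \<beta> * (\<alpha> * u) * tableau_sum \<alpha> \<beta> n u (\<lambda>a. g (Suc a) - g a)"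
  by (simp add: tableau_sum_Suc[of _ _ "Suc n"] tableau_sum_last_free_Suc mult.assoc)

lemma staircase_0: "staircase 0 = {\<lambda>_. Empty}"
proof (intro equalityI subsetI)
  fix S assume "S \<in> staircase 0"
  then have "S b = Empty" for b using staircase_outside[of S 0 b] unfolding is_box_def by (cases b) auto
  then show "S \<in> {\<lambda>_. Empty}" by auto
qed (auto simp: staircase_def is_box_def)

lemma tableau_sum_0: "tableau_sum \<alpha> \<beta> 0 u g = g 0"
proof -
  have "beta_free_rows 0 (\<lambda>_. Empty) = {}" unfolding beta_free_rows_def by auto
  then show ?thesis unfolding tableau_sum_def staircase_0 by (simp add: wt_def num_sym_def A_count_def)
qed

lemma tableau_sum_last_free_0: "tableau_sum_last_free \<alpha> \<beta> 0 u h = 0"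
  unfolding tableau_sum_last_free_def beta_free_rows_def by simp

lemma tableau_sum_const_eq_prod: "tableau_sum \<alpha> \<beta> n u (\<lambda>_. 1) = (\<Prod>i<n. \<beta> + \<alpha> * (u + real i * \<beta>))"
proof (induction n arbitrary: u)
  case (Suc n)
  have "tableau_sum \<alpha> \<beta> (Suc n) u (\<lambda>_. 1) = (\<beta> + \<alpha> * u) * tableau_sum \<alpha> \<beta> n (u + \<beta>) (\<lambda>_. 1)"
    unfolding tableau_sum_Suc by (simp add: tableau_sum_last_free_def)
  also have "\<dots> = (\<Prod>i<Suc n. \<beta> + \<alpha> * (u + real i * \<beta>))"
    unfolding Suc prod.lessThan_Suc_shift by (simp add: algebra_simps)
  finally show ?case .
qed (simp add: tableau_sum_0)

lemma tableau_sum_const_pos: "0 < \<alpha> \<Longrightarrow> 0 < \<beta> \<Longrightarrow> 0 \<le> u \<Longrightarrow> 0 < tableau_sum \<alpha> \<beta> n u (\<lambda>_. 1)"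
  unfolding tableau_sum_const_eq_prod by (intro prod_pos) (auto intro!: add_pos_nonneg)

lemma tableau_sum_const_Suc_Suc:
  assumes "0 < \<alpha>" "0 < \<beta>" "0 \<le> u"
  shows "\<alpha> * \<beta> * (\<alpha> * u) * tableau_sum \<alpha> \<beta> m u (\<lambda>_. 1)
    = tableau_sum \<alpha> \<beta> (Suc (Suc m)) u (\<lambda>_. 1) * (u / \<beta>)
      / ((u / \<beta> + 1 / \<alpha> + m) * (u / \<beta> + 1 / \<alpha> + m + 1))"
proof -
  define y where "y = u / \<beta> + 1 / \<alpha> + m"
  have "0 < y" unfolding y_def using assms by (intro add_pos_nonneg add_nonneg_pos divide_nonneg_pos) auto
  have "\<beta> + \<alpha> * (u + real m * \<beta>) = \<alpha> * \<beta> * y" "\<beta> + \<alpha> * (u + real (Suc m) * \<beta>) = \<alpha> * \<beta> * (y + 1)"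
    unfolding y_def using assms by (simp_all add: field_simps)
  then have Z: "tableau_sum \<alpha> \<beta> (Suc (Suc m)) u (\<lambda>_. 1) = tableau_sum \<alpha> \<beta> m u (\<lambda>_. 1) * (\<alpha> * \<beta> * y * (\<alpha> * \<beta> * (y + 1)))"
    unfolding tableau_sum_const_eq_prod by (simp add: mult_ac)
  have "\<alpha> * \<beta> * y * (\<alpha> * \<beta> * (y + 1)) * (u / \<beta>) = \<alpha> * \<beta> * (\<alpha> * u) * (y * (y + 1))"
    using assms by (simp add: field_simps)
  then have "\<alpha> * \<beta> * (\<alpha> * u) = \<alpha> * \<beta> * y * (\<alpha> * \<beta> * (y + 1)) * (u / \<beta>) / (y * (y + 1))"
    using \<open>0 < y\<close> by simp
  then show ?thesis
    unfolding y_def[symmetric] Z by (simp only: mult_ac times_divide_eq_left times_divide_eq_right)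
qed

lemma tableau_sum_choose:
  assumes "0 < \<alpha>" "0 < \<beta>" "0 < u"
  shows "tableau_sum \<alpha> \<beta> n u (\<lambda>a. real (a choose k)) = tableau_sum \<alpha> \<beta> n u (\<lambda>_. 1) * factorial_moment (1/\<alpha>) k n (u / \<beta>)"
  using assms(3)
proof (induction n arbitrary: k u rule: induct_nat_012)
  case 0
  then show ?case by (cases k) (simp_all add: tableau_sum_0)
next
  case 1
  then show ?case by (cases k) (simp_all add: tableau_sum_Suc tableau_sum_0 tableau_sum_last_free_0)
next
  case (ge2 m)
  show ?case
  proof (cases k)
    case (Suc k)
    let ?Z = "\<lambda>n u. tableau_sum \<alpha> \<beta> n u (\<lambda>_. 1)" and ?x = "u / \<beta>" and ?a = "1 / \<alpha>"
    have x1: "(u + \<beta>) / \<beta> = ?x + 1" using assms by (simp add: field_simps)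
    have "tableau_sum \<alpha> \<beta> (Suc (Suc m)) u (\<lambda>a. real (a choose Suc k))
        = (\<beta> + \<alpha> * u) * tableau_sum \<alpha> \<beta> (Suc m) (u + \<beta>) (\<lambda>a. real (a choose Suc k))
          + \<alpha> * \<beta> * (\<alpha> * u) * tableau_sum \<alpha> \<beta> m u (\<lambda>a. real (a choose k))"
      by (simp add: tableau_sum_Suc_Suc)
    also have "\<dots> = (\<beta> + \<alpha> * u) * ?Z (Suc m) (u + \<beta>) * factorial_moment ?a (Suc k) (Suc m) (?x + 1)
          + \<alpha> * \<beta> * (\<alpha> * u) * ?Z m u * factorial_moment ?a k m ?x"
      using ge2.IH[of "u + \<beta>" "Suc k"] ge2.IH(1)[of u k] ge2.prems assms by (simp add: x1 del: factorial_moment.simps)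
    also have "(\<beta> + \<alpha> * u) * ?Z (Suc m) (u + \<beta>) = ?Z (Suc (Suc m)) u"
      by (simp add: tableau_sum_Suc[of _ _ "Suc m"] tableau_sum_last_free_def)
    also have "\<alpha> * \<beta> * (\<alpha> * u) * ?Z m u = ?Z (Suc (Suc m)) u * ?x / ((?x + ?a + m) * (?x + ?a + m + 1))"
      using assms ge2.prems by (intro tableau_sum_const_Suc_Suc) auto
    also have "?Z (Suc (Suc m)) u * factorial_moment ?a (Suc k) (Suc m) (?x + 1)
        + ?Z (Suc (Suc m)) u * ?x / ((?x + ?a + m) * (?x + ?a + m + 1)) * factorial_moment ?a k m ?x
        = ?Z (Suc (Suc m)) u * factorial_moment ?a (Suc k) (Suc (Suc m)) ?x"
      unfolding factorial_moment_Suc_Suc[of ?a k m ?x] by (simp add: algebra_simps del: factorial_moment.simps)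
    finally show ?thesis
      using Suc by (simp del: factorial_moment.simps)
  qed simp
qed

section \<open>The law of A_n\<close>

lemma cdf_distr_nat_valued:
  assumes M: "finite_measure M" and f: "f \<in> M \<rightarrow>\<^sub>M count_space UNIV"
  shows "cdf (distr M borel (\<lambda>\<omega>. real (f \<omega>))) x = (\<Sum>j<nat (\<lfloor>x\<rfloor> + 1). measure M {\<omega> \<in> space M. f \<omega> = j})"
proof -
  define K where "K = nat (\<lfloor>x\<rfloor> + 1)"
  have f_sets: "{\<omega> \<in> space M. f \<omega> = j} \<in> sets M" for j
    using measurable_sets[OF f, of "{j}"] by (simp add: vimage_def Int_def conj_commute)
  have "(\<lambda>\<omega>. real (f \<omega>)) \<in> M \<rightarrow>\<^sub>M borel"
    using f by (rule measurable_compose) simp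
  then have "cdf (distr M borel (\<lambda>\<omega>. real (f \<omega>))) x = measure M ((\<lambda>\<omega>. real (f \<omega>)) -` {..x} \<inter> space M)"
    unfolding cdf_def by (rule measure_distr) simp
  also have "(\<lambda>\<omega>. real (f \<omega>)) -` {..x} \<inter> space M = (\<Union>j<K. {\<omega> \<in> space M. f \<omega> = j})"
    unfolding K_def by auto linarith+
  also have "measure M \<dots> = (\<Sum>j<K. measure M {\<omega> \<in> space M. f \<omega> = j})"
    using f_sets by (intro finite_measure.finite_measure_finite_Union[OF M]) (auto simp: disjoint_family_on_def)
  finally show ?thesis unfolding K_def .
qed

definition stair_expectation :: "real \<Rightarrow> real \<Rightarrow> nat \<Rightarrow> (nat \<Rightarrow> real) \<Rightarrow> real" where
  "stair_expectation \<alpha> \<beta> n g = (\<Sum>S\<in>staircase n. stair_prob \<alpha> \<beta> n S * g (A_count n S))"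

lemma stair_expectation_eq_tableau_sum:
  "stair_expectation \<alpha> \<beta> n g = tableau_sum \<alpha> \<beta> n 1 g / tableau_sum \<alpha> \<beta> n 1 (\<lambda>_. 1)"
  by (simp add: stair_expectation_def stair_prob_def tableau_sum_def sum_divide_distrib)

lemma stair_expectation_choose:
  assumes "0 < \<alpha>" "0 < \<beta>"
  shows "stair_expectation \<alpha> \<beta> n (\<lambda>a. real (a choose k)) = factorial_moment (1/\<alpha>) k n (1/\<beta>)"
  using tableau_sum_choose[OF assms, of 1 n k] tableau_sum_const_pos[OF assms, of 1 n]
  by (simp add: stair_expectation_eq_tableau_sum)

lemma stair_expectation_bonferroni:
  assumes "0 < \<alpha>" "0 < \<beta>"
  shows "0 \<le> (-1)^M * ((\<Sum>i\<le>M. (-1)^i * real (j+i choose j) * stair_expectation \<alpha> \<beta> n (\<lambda>a. real (a choose (j+i))))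
           - stair_expectation \<alpha> \<beta> n (\<lambda>a. of_bool (a = j)))"
proof -
  have "(-1)^M * ((\<Sum>i\<le>M. (-1)^i * real (j+i choose j) * stair_expectation \<alpha> \<beta> n (\<lambda>a. real (a choose (j+i))))
           - stair_expectation \<alpha> \<beta> n (\<lambda>a. of_bool (a = j)))
      = stair_expectation \<alpha> \<beta> n (\<lambda>a. (-1)^M * (bonferroni_sum j M a - of_bool (a = j)))"
    by (simp add: stair_expectation_def bonferroni_sum_def sum_distrib_left sum_subtractf algebra_simps
        sum.swap[of _ "{..M}"])
  also have "\<dots> \<ge> 0"
    unfolding stair_expectation_def stair_prob_def wt_def using assms
    by (intro sum_nonneg mult_nonneg_nonneg divide_nonneg_nonneg bonferroni_sum_sign) auto
  finally show ?thesis .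
qed

lemma stair_expectation_tendsto_poisson:
  assumes "0 < \<alpha>" "0 < \<beta>"
  shows "(\<lambda>n. stair_expectation \<alpha> \<beta> n (\<lambda>a. of_bool (a = j))) \<longlonglongrightarrow> (1/2)^j / fact j * exp (- (1/2))"
proof (rule tendsto_poisson_of_factorial_moments)
  show "0 \<le> (-1)^M * ((\<Sum>i\<le>M. (-1)^i * real (j+i choose j) * factorial_moment (1/\<alpha>) (j+i) n (1/\<beta>))
      - stair_expectation \<alpha> \<beta> n (\<lambda>a. of_bool (a = j)))" for n M
    using stair_expectation_bonferroni[OF assms, of M j n] by (simp add: stair_expectation_choose[OF assms])
  show "(\<lambda>n. factorial_moment (1/\<alpha>) k n (1/\<beta>)) \<longlonglongrightarrow> (1/2)^k / fact k" for k
    using assms by (intro factorial_moment_tendsto) auto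
qed

lemma finite_measure_stair_measure: "finite_measure (stair_measure \<alpha> \<beta> n)"
  by (rule finite_measureI)
     (simp add: stair_measure_def space_point_measure emeasure_point_measure_finite finite_staircase)

lemma measure_stair_measure_A_count:
  assumes "0 < \<alpha>" "0 < \<beta>"
  shows "measure (stair_measure \<alpha> \<beta> n) {S \<in> space (stair_measure \<alpha> \<beta> n). A_count n S = j}
    = stair_expectation \<alpha> \<beta> n (\<lambda>a. of_bool (a = j))"
proof -
  have "0 \<le> stair_prob \<alpha> \<beta> n S" for S
    unfolding stair_prob_def wt_def using assms by (intro divide_nonneg_nonneg sum_nonneg) auto
  then show ?thesis
    by (simp add: stair_measure_def space_point_measure measure_point_measure_finite_if finite_staircase
        stair_expectation_def sum.inter_filter[symmetric] of_bool_def if_distrib cong: if_cong)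
qed

theorem theorem3p5:
  fixes \<alpha> \<beta> :: real
  assumes "\<alpha> > 0" and "\<beta> > 0"
  shows "weak_conv_m (\<lambda>n. A_law \<alpha> \<beta> n) (distr (measure_pmf (poisson_pmf (1/2))) borel real)"
  unfolding weak_conv_m_def weak_conv_def
proof (intro allI impI)
  fix x :: real
  have "A_count n \<in> stair_measure \<alpha> \<beta> n \<rightarrow>\<^sub>M count_space UNIV" for n
    by (simp add: stair_measure_def)
  then have A: "cdf (A_law \<alpha> \<beta> n) x = (\<Sum>j<nat (\<lfloor>x\<rfloor> + 1). stair_expectation \<alpha> \<beta> n (\<lambda>a. of_bool (a = j)))" for n
    unfolding A_law_def
    by (simp add: cdf_distr_nat_valued finite_measure_stair_measure measure_stair_measure_A_count assms)
  have P: "cdf (distr (measure_pmf (poisson_pmf (1/2))) borel real) x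
      = (\<Sum>j<nat (\<lfloor>x\<rfloor> + 1). (1/2)^j / fact j * exp (- (1/2)))"
    using cdf_distr_nat_valued[of "measure_pmf (poisson_pmf (1/2))" "\<lambda>j. j" x]
    by (simp add: measure_pmf.finite_measure_axioms measure_pmf_single pmf_poisson)
  show "(\<lambda>n. cdf (A_law \<alpha> \<beta> n) x) \<longlonglongrightarrow> cdf (distr (measure_pmf (poisson_pmf (1/2))) borel real) x"
    unfolding A P by (intro tendsto_sum stair_expectation_tendsto_poisson assms)
qed

end
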